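(* Let $P$ be a finite bounded poset (minimum $\hat{0}$, maximum $\hat{1}$) with height function $h$, and let $H$ be the maximal value of $h$. Let $\operatorname{Inc}_q(P,h)$ be the set of matrices $A$ indexed by $P\times P$ with entries in $\mathbb{Z}[q,q^{-1}]$ and $A_{x,y}=0$ unless $x\le y$, with product $A\times_q B=AD_hB$, where $D_h$ is the diagonal matrix with entries $q^{h(x)}$; this is an associative product with unit $D_h^{-1}$. Let $Z$ be the zeta matrix ($Z_{x,y}=1$ if $x\le y$, $0$ otherwise), which is invertible for $\times_q$, and let $Z^{\times_q n}$, $n\in\mathbb{Z}$, be its powers for $\times_q$. Let $\Delta_q$ act on sequences $(a_n)_{n\in\mathbb{Z}}$ by $(\Delta_q a)_n=(a_n-a_{n-1})/q^n$. Then the sequence $(Z^{\times_q n})_{n\in\mathbb{Z}}$ is annihilated by $\Delta_q^{H+1}$, and for every $n\in\mathbb{Z}$, $\mathsf{Z}_{P,h}([n]_q)$ equals the entry of index $(\hat{0},\hat{1})$ of $Z^{\times_q n}$.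
   Context: $q$ is an indeterminate; $[n]_q=(q^n-1)/(q-1)$ for $n\in\mathbb{Z}$. A height function on $P$ is $h:P\to\mathbb{N}$ with $h(x)<h(y)$ whenever $y$ covers $x$. The $q$-Zeta polynomial $\mathsf{Z}_{P,h}\in\mathbb{Q}(q)[x]$ is the unique polynomial with $\mathsf{Z}_{P,h}([n]_q)=\sum_{e_1\le\cdots\le e_{n-1}\text{ in }P}q^{h(e_1)+\cdots+h(e_{n-1})}$ for all $n\ge2$ (explicitly $\sum_{k\ge1}\sum_{c_1<\cdots<c_k}q^{\sum h(c_i)}\mathsf{E}_{(h(c_1),\dots,h(c_k))}((x-[k+1]_q)/q^{k+1})$ with $\mathsf{E}_a$ the unique polynomial with $\mathsf{E}_a([m]_q)=\sum_{m'\in\mathbb{N}^k,\sum m'_i=m}q^{\sum a_im'_i}$ for $m\ge0$); its values at other $[n]_q$ are by evaluation. *)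

theory Defs
  imports Main "HOL-Computational_Algebra.Polynomial" "HOL-Computational_Algebra.Fraction_Field"
begin

text \<open>Coefficient field Q(q): rational functions in the indeterminate q.
  Laurent polynomials Z[q,q^-1] embed into it.\<close>
type_synonym qfield = "rat poly fract"

definition qvar :: qfield where
  "qvar = Fract [:0, 1:] 1"

definition qint :: "int \<Rightarrow> qfield" where
  "qint n = (qvar powi n - 1) / (qvar - 1)"

definition covers :: "'a::order \<Rightarrow> 'a \<Rightarrow> bool" where
  "covers x y \<longleftrightarrow> x < y \<and> \<not> (\<exists>z. x < z \<and> z < y)"

definition height_fun :: "('a::order \<Rightarrow> nat) \<Rightarrow> bool" where
  "height_fun h \<longleftrightarrow> (\<forall>x y. covers x y \<longrightarrow> h x < h y)"

definition multichain_sum :: "('a::{finite,order} \<Rightarrow> nat) \<Rightarrow> nat \<Rightarrow> qfield" where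
  "multichain_sum h m =
     (\<Sum>es \<in> {es :: 'a list. length es = m \<and> sorted_wrt (\<le>) es}.
        qvar ^ sum_list (map h es))"

definition qZeta :: "('a::{finite,order} \<Rightarrow> nat) \<Rightarrow> qfield poly" where
  "qZeta h = (THE p. \<forall>n::nat. n \<ge> 2 \<longrightarrow> poly p (qint (int n)) = multichain_sum h (n - 1))"

type_synonym 'a qmat = "'a \<Rightarrow> 'a \<Rightarrow> qfield"

definition qtimes :: "('a::finite \<Rightarrow> nat) \<Rightarrow> 'a qmat \<Rightarrow> 'a qmat \<Rightarrow> 'a qmat" where
  "qtimes h A B = (\<lambda>x y. \<Sum>z\<in>UNIV. A x z * qvar ^ h z * B z y)"

definition qunit :: "('a \<Rightarrow> nat) \<Rightarrow> 'a qmat" where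
  "qunit h = (\<lambda>x y. if x = y then inverse (qvar ^ h x) else 0)"

definition zeta_mat :: "'a::order qmat" where
  "zeta_mat = (\<lambda>x y. if x \<le> y then 1 else 0)"

definition zeta_qinv :: "('a::{finite,order} \<Rightarrow> nat) \<Rightarrow> 'a qmat" where
  "zeta_qinv h = (THE B. qtimes h zeta_mat B = qunit h \<and> qtimes h B zeta_mat = qunit h)"

definition zeta_qpow :: "('a::{finite,order} \<Rightarrow> nat) \<Rightarrow> int \<Rightarrow> 'a qmat" where
  "zeta_qpow h n =
     (if n \<ge> 0 then (qtimes h zeta_mat ^^ nat n) (qunit h)
      else (qtimes h (zeta_qinv h) ^^ nat (- n)) (qunit h))"

definition qdiff :: "(int \<Rightarrow> 'a qmat) \<Rightarrow> int \<Rightarrow> 'a qmat" where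
  "qdiff a = (\<lambda>n x y. (a n x y - a (n - 1) x y) / qvar powi n)"

end

(* Write T A = Z \<times>_q A = Z D_h A. The zeta matrix is 1 + N with N the strict zeta matrix,
   which is nilpotent because h increases strictly along chains; so Z is \<times>_q-invertible and
   Z^(\<times>_q n) = T Z^(\<times>_q (n-1)) for every integer n. By induction on k,
   q^(kn) \<Delta>_q^k Z^(\<times>_q n) = (T - q^0) (T - q^1) ... (T - q^(k-1)) Z^(\<times>_q (n-k)),
   and T - q^j sends matrices whose rows of height > j vanish to matrices whose rows of height
   \<ge> j vanish, since T acts on such a row x as multiplication by q^(h x). Hence the product
   of the H + 1 factors is zero.
   A scalar sequence killed by a power of \<Delta>_q is a polynomial in q^n, hence in [n]_q. For the
   (bot, top) entry this polynomial takes the multichain sums as values at [n]_q for n \<ge> 1, since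
   positive \<times>_q-powers of Z expand into q-weighted multichains; as the [n]_q are pairwise
   distinct, it is the q-Zeta polynomial. *)

theory Submission
  imports Defs
begin

section \<open>The indeterminate q\<close>

lemma qvar_power: "qvar ^ k = Fract (monom 1 k) 1"
  by (induction k) (simp_all add: qvar_def One_fract_def monom_Suc mult.commute)

lemma qvar_power_eq_iff: "qvar ^ m = qvar ^ n \<longleftrightarrow> m = n"
  by (simp add: qvar_power eq_fract monom_eq_iff')

lemma qvar_nonzero: "qvar \<noteq> 0"
  using qvar_power_eq_iff[of 1 2] by auto

lemma qvar_power_eq_1_iff: "qvar ^ k = 1 \<longleftrightarrow> k = 0"
  using qvar_power_eq_iff[of k 0] by simp

lemma qvar_powi_eq_qint: "qvar powi n = 1 + (qvar - 1) * qint n"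
  using qvar_power_eq_1_iff[of 1] by (simp add: qint_def)

lemma inj_qint_of_nat: "inj (\<lambda>n::nat. qint (int n))"
proof (rule injI)
  fix m n :: nat
  assume "qint (int m) = qint (int n)"
  then have "qvar ^ m = qvar ^ n"
    using qvar_powi_eq_qint[of "int m"] qvar_powi_eq_qint[of "int n"] by simp
  then show "m = n" by (simp add: qvar_power_eq_iff)
qed

section \<open>Matrices indexed by a finite type\<close>

definition mat_mult :: "('a::finite \<Rightarrow> 'a \<Rightarrow> 'b::semiring_0) \<Rightarrow> ('a \<Rightarrow> 'a \<Rightarrow> 'b) \<Rightarrow> 'a \<Rightarrow> 'a \<Rightarrow> 'b"
  where "mat_mult A B = (\<lambda>x y. \<Sum>z\<in>UNIV. A x z * B z y)"

definition mat_one :: "'a \<Rightarrow> 'a \<Rightarrow> 'b::{zero,one}"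
  where "mat_one = (\<lambda>x y. if x = y then 1 else 0)"

definition mat_diag :: "('a \<Rightarrow> 'b) \<Rightarrow> 'a \<Rightarrow> 'a \<Rightarrow> 'b::zero"
  where "mat_diag d = (\<lambda>x y. if x = y then d x else 0)"

definition mat_pow :: "('a::finite \<Rightarrow> 'a \<Rightarrow> 'b::semiring_1) \<Rightarrow> nat \<Rightarrow> 'a \<Rightarrow> 'a \<Rightarrow> 'b"
  where "mat_pow A k = (mat_mult A ^^ k) mat_one"

lemma mat_mult_assoc: "mat_mult (mat_mult A B) C = mat_mult A (mat_mult B C)"
  unfolding mat_mult_def
  by (intro ext) (simp add: sum_distrib_left sum_distrib_right mult.assoc, rule sum.swap)

lemma mat_mult_diag_left: "mat_mult (mat_diag d) A = (\<lambda>x y. d x * A x y)"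
  by (intro ext) (simp add: mat_mult_def mat_diag_def if_distrib[of "\<lambda>u. u * _"] cong: if_cong)

lemma mat_mult_diag_right: "mat_mult A (mat_diag d) = (\<lambda>x y. A x y * d y)"
  by (intro ext) (simp add: mat_mult_def mat_diag_def if_distrib[of "\<lambda>u. _ * u"] cong: if_cong)

lemma mat_one_eq_mat_diag: "mat_one = mat_diag (\<lambda>_. 1)"
  by (simp add: mat_one_def mat_diag_def)

lemma mat_mult_one_left [simp]: "mat_mult mat_one A = A"
  and mat_mult_one_right [simp]: "mat_mult A mat_one = A"
  for A :: "'a::finite \<Rightarrow> 'a \<Rightarrow> 'b::semiring_1"
  by (simp_all add: mat_one_eq_mat_diag mat_mult_diag_left mat_mult_diag_right)

lemma mat_mult_add_left:
  "mat_mult (\<lambda>x y. A x y + B x y) C = (\<lambda>x y. mat_mult A C x y + mat_mult B C x y)"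
  and mat_mult_add_right:
  "mat_mult C (\<lambda>x y. A x y + B x y) = (\<lambda>x y. mat_mult C A x y + mat_mult C B x y)"
  by (simp_all add: mat_mult_def sum.distrib algebra_simps)

lemma mat_mult_lincomb_left:
  "mat_mult (\<lambda>x y. \<Sum>k\<in>K. c k * B k x y) A = (\<lambda>x y. \<Sum>k\<in>K. c k * mat_mult (B k) A x y)"
  and mat_mult_lincomb_right:
  "mat_mult A (\<lambda>x y. \<Sum>k\<in>K. c k * B k x y) = (\<lambda>x y. \<Sum>k\<in>K. c k * mat_mult A (B k) x y)"
  for c :: "_ \<Rightarrow> 'b::comm_semiring_0"
  by (simp_all add: mat_mult_def sum_distrib_left sum_distrib_right mult.left_commute mult.assoc,
      (subst sum.swap, rule refl)+)

lemma mat_pow_0 [simp]: "mat_pow A 0 = mat_one"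
  and mat_pow_Suc: "mat_pow A (Suc k) = mat_mult A (mat_pow A k)"
  by (simp_all add: mat_pow_def)

lemma mat_pow_commute: "mat_mult A (mat_pow A k) = mat_mult (mat_pow A k) A"
proof (induction k)
  case (Suc k)
  then have "mat_mult A (mat_pow A (Suc k)) = mat_mult A (mat_mult (mat_pow A k) A)"
    by (simp add: mat_pow_Suc)
  then show ?case by (simp add: mat_pow_Suc mat_mult_assoc)
qed simp

lemma mat_one_plus_nilpotent_inverse:
  fixes N :: "'a::finite \<Rightarrow> 'a \<Rightarrow> 'b::comm_ring_1"
  assumes "mat_pow N (Suc m) = (\<lambda>x y. 0)"
  defines "S \<equiv> \<lambda>x y. \<Sum>k\<le>m. (-1) ^ k * mat_pow N k x y"
  shows "mat_mult (\<lambda>x y. mat_one x y + N x y) S = mat_one"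
    and "mat_mult S (\<lambda>x y. mat_one x y + N x y) = mat_one"
proof -
  have telescope: "(\<lambda>x y. \<Sum>k\<le>m. (-1) ^ k * (mat_pow N k x y + mat_pow N (Suc k) x y)) = mat_one"
  proof (intro ext)
    fix x y
    have "(\<Sum>k\<le>m. (-1) ^ k * (mat_pow N k x y + mat_pow N (Suc k) x y))
        = mat_pow N 0 x y + (-1) ^ m * mat_pow N (Suc m) x y"
      by (induction m) (simp_all add: algebra_simps)
    then show "(\<Sum>k\<le>m. (-1) ^ k * (mat_pow N k x y + mat_pow N (Suc k) x y)) = mat_one x y"
      using assms(1) by simp
  qed
  show "mat_mult (\<lambda>x y. mat_one x y + N x y) S = mat_one"
    using telescope
    by (simp add: S_def mat_mult_add_left mat_mult_lincomb_right mat_pow_Suc sum.distrib algebra_simps)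
  show "mat_mult S (\<lambda>x y. mat_one x y + N x y) = mat_one"
    using telescope
    by (simp add: S_def mat_mult_add_right mat_mult_lincomb_left mat_pow_Suc mat_pow_commute
        sum.distrib algebra_simps)
qed

section \<open>The product \<open>\<times>\<^sub>q\<close> and integer powers of the zeta matrix\<close>

definition qdiag :: "('a \<Rightarrow> nat) \<Rightarrow> 'a qmat"
  where "qdiag h = mat_diag (\<lambda>x. qvar ^ h x)"

definition strict_zeta :: "'a::order \<Rightarrow> 'a \<Rightarrow> 'b::{zero,one}"
  where "strict_zeta = (\<lambda>x y. if x < y then 1 else 0)"

lemma qtimes_eq_mat_mult: "qtimes h A B = mat_mult A (mat_mult (qdiag h) B)"
  unfolding qdiag_def mat_mult_diag_left by (simp add: qtimes_def mat_mult_def mult.assoc)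

lemma qdiag_qunit [simp]: "mat_mult (qdiag h) (qunit h) = mat_one"
  and qunit_qdiag [simp]: "mat_mult (qunit h) (qdiag h) = mat_one"
  unfolding qdiag_def
  by (intro ext; simp add: mat_mult_diag_left mat_mult_diag_right qunit_def mat_one_def qvar_nonzero)+

lemma qdiag_qunit_cancel [simp]: "mat_mult (qdiag h) (mat_mult (qunit h) A) = A"
  and qunit_qdiag_cancel [simp]: "mat_mult (qunit h) (mat_mult (qdiag h) A) = A"
  by (simp_all flip: mat_mult_assoc)

lemma qtimes_assoc: "qtimes h (qtimes h A B) C = qtimes h A (qtimes h B C)"
  by (simp add: qtimes_eq_mat_mult mat_mult_assoc)

lemma qtimes_qunit_left [simp]: "qtimes h (qunit h) A = A"
  and qtimes_qunit_right [simp]: "qtimes h A (qunit h) = A"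
  by (simp_all add: qtimes_eq_mat_mult)

lemma zeta_mat_eq_one_plus_strict_zeta: "zeta_mat = (\<lambda>x y. mat_one x y + strict_zeta x y)"
  by (intro ext) (auto simp: zeta_mat_def mat_one_def strict_zeta_def less_le)

lemma height_fun_less:
  fixes h :: "'a::{finite,order} \<Rightarrow> nat"
  assumes "height_fun h" and "x < y"
  shows "h x < h y"
  using assms(2)
proof (induction "card {z. x < z \<and> z < y}" arbitrary: x y rule: less_induct)
  case less
  show ?case
  proof (cases "covers x y")
    case True
    then show ?thesis using assms(1) by (auto simp: height_fun_def)
  next
    case False
    then obtain z where z: "x < z" "z < y" using less.prems by (auto simp: covers_def)
    have "card {w. x < w \<and> w < z} < card {w. x < w \<and> w < y}"
      and "card {w. z < w \<and> w < y} < card {w. x < w \<and> w < y}"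
      by (intro psubset_card_mono; use z in \<open>auto dest: order.strict_trans\<close>)+
    with less z have "h x < h z" and "h z < h y" by blast+
    then show ?thesis by simp
  qed
qed

lemma mat_pow_strict_zeta_nonzero:
  fixes h :: "'a::{finite,order} \<Rightarrow> nat"
  assumes "height_fun h" and "mat_pow strict_zeta k x y \<noteq> (0::'b::semiring_1)"
  shows "h x + k \<le> h y"
  using assms(2)
proof (induction k arbitrary: x)
  case 0
  then show ?case by (simp add: mat_one_def split: if_splits)
next
  case (Suc k)
  then obtain z where "strict_zeta x z * mat_pow strict_zeta k z y \<noteq> (0::'b)"
    by (metis (mono_tags, lifting) mat_mult_def mat_pow_Suc sum.neutral)
  then have "x < z" and "mat_pow strict_zeta k z y \<noteq> (0::'b)"
    by (auto simp: strict_zeta_def split: if_splits)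
  then show ?case using Suc.IH height_fun_less[OF assms(1)] by fastforce
qed

lemma mat_pow_strict_zeta_eq_0:
  fixes h :: "'a::{finite,order} \<Rightarrow> nat"
  assumes "height_fun h"
  shows "(mat_pow strict_zeta (Suc (Max (range h))) :: 'a \<Rightarrow> 'a \<Rightarrow> 'b::semiring_1) = (\<lambda>x y. 0)"
proof (intro ext)
  fix x y :: 'a
  have "h y \<le> Max (range h)" by simp
  then have "\<not> h x + Suc (Max (range h)) \<le> h y" by linarith
  then show "mat_pow strict_zeta (Suc (Max (range h))) x y = (0::'b)"
    using mat_pow_strict_zeta_nonzero[OF assms] by blast
qed

lemma qtimes_zeta_qinv:
  fixes h :: "'a::{finite,order} \<Rightarrow> nat"
  assumes "height_fun h"
  shows "qtimes h zeta_mat (zeta_qinv h) = qunit h" and "qtimes h (zeta_qinv h) zeta_mat = qunit h"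
proof -
  obtain S :: "'a qmat" where S: "mat_mult zeta_mat S = mat_one" "mat_mult S zeta_mat = mat_one"
    using mat_one_plus_nilpotent_inverse[OF mat_pow_strict_zeta_eq_0[OF assms]]
    unfolding zeta_mat_eq_one_plus_strict_zeta by blast
  define B where "B = mat_mult (qunit h) (mat_mult S (qunit h))"
  have "qtimes h zeta_mat B = mat_mult (mat_mult zeta_mat S) (qunit h)"
    and "qtimes h B zeta_mat = mat_mult (qunit h) (mat_mult S zeta_mat)"
    by (simp_all add: B_def qtimes_eq_mat_mult mat_mult_assoc)
  with S have B: "qtimes h zeta_mat B = qunit h \<and> qtimes h B zeta_mat = qunit h"
    by simp
  have "zeta_qinv h = B"
    unfolding zeta_qinv_def
  proof (rule the_equality)
    fix B' assume B': "qtimes h zeta_mat B' = qunit h \<and> qtimes h B' zeta_mat = qunit h"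
    have "B' = qtimes h (qtimes h B' zeta_mat) B"
      using B by (simp add: qtimes_assoc)
    then show "B' = B" using B' by simp
  qed (rule B)
  with B show "qtimes h zeta_mat (zeta_qinv h) = qunit h" and "qtimes h (zeta_qinv h) zeta_mat = qunit h"
    by simp_all
qed

lemma zeta_qpow_rec:
  fixes h :: "'a::{finite,order} \<Rightarrow> nat"
  assumes "height_fun h"
  shows "zeta_qpow h n = qtimes h zeta_mat (zeta_qpow h (n - 1))"
proof (cases "n \<ge> 1")
  case True
  then have "nat n = Suc (nat (n - 1))" by simp
  with True show ?thesis by (simp add: zeta_qpow_def)
next
  case False
  then have "nat (- (n - 1)) = Suc (nat (- n))" by simp
  with False have "zeta_qpow h (n - 1) = qtimes h (zeta_qinv h) (zeta_qpow h n)"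
    by (cases "n = 0") (simp_all add: zeta_qpow_def)
  then show ?thesis by (simp flip: qtimes_assoc add: qtimes_zeta_qinv[OF assms])
qed

section \<open>Annihilation by a power of \<open>\<Delta>\<^sub>q\<close>\<close>

definition zeta_sub :: "('a::{finite,order} \<Rightarrow> nat) \<Rightarrow> nat \<Rightarrow> 'a qmat \<Rightarrow> 'a qmat"
  where "zeta_sub h j A = (\<lambda>x y. qtimes h zeta_mat A x y - qvar ^ j * A x y)"

primrec zeta_sub_prod :: "('a::{finite,order} \<Rightarrow> nat) \<Rightarrow> nat \<Rightarrow> nat \<Rightarrow> 'a qmat \<Rightarrow> 'a qmat" where
  "zeta_sub_prod h j 0 A = A"
| "zeta_sub_prod h j (Suc k) A = zeta_sub h j (zeta_sub_prod h (Suc j) k A)"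

lemma zeta_sub_prod_Suc_right: "zeta_sub_prod h j (Suc k) A = zeta_sub_prod h j k (zeta_sub h (j + k) A)"
  by (induction k arbitrary: j) simp_all

lemma zeta_sub_prod_diff:
  "zeta_sub_prod h j k (\<lambda>x y. A x y - c * B x y)
     = (\<lambda>x y. zeta_sub_prod h j k A x y - c * zeta_sub_prod h j k B x y)"
proof (induction k arbitrary: j)
  case (Suc k)
  have "zeta_sub h j (\<lambda>x y. A x y - c * B x y) = (\<lambda>x y. zeta_sub h j A x y - c * zeta_sub h j B x y)"
    for j and A B :: "'a qmat"
    by (simp add: zeta_sub_def qtimes_def algebra_simps sum_subtractf sum_distrib_left)
  with Suc show ?case by simp
qed simp

lemma zeta_sub_vanishes:
  fixes h :: "'a::{finite,order} \<Rightarrow> nat"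
  assumes "height_fun h" and A: "\<And>z y. Suc j \<le> h z \<Longrightarrow> A z y = 0" and "j \<le> h x"
  shows "zeta_sub h j A x y = 0"
proof -
  \<comment> \<open>On a row of height at least \<open>j\<close>, only the diagonal entry of \<open>Z\<close> meets a nonzero entry of \<open>A\<close>.\<close>
  have "A z y = 0" if "x < z" for z
    using height_fun_less[OF assms(1) that] A[of z y] \<open>j \<le> h x\<close> by simp
  then have "zeta_mat x z * qvar ^ h z * A z y = 0" if "z \<noteq> x" for z
    using that order_le_neq_trans[of x z] by (auto simp: zeta_mat_def)
  then have "qtimes h zeta_mat A x y = qvar ^ h x * A x y"
    by (simp add: qtimes_def sum.remove[of UNIV x] sum.neutral zeta_mat_def)
  moreover have "A x y = 0" if "h x \<noteq> j"
    using A \<open>j \<le> h x\<close> that by simp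
  ultimately show ?thesis
    by (cases "h x = j") (simp_all add: zeta_sub_def)
qed

lemma zeta_sub_prod_vanishes:
  fixes h :: "'a::{finite,order} \<Rightarrow> nat"
  assumes "height_fun h" and "\<And>z y. j + k \<le> h z \<Longrightarrow> A z y = 0" and "j \<le> h x"
  shows "zeta_sub_prod h j k A x y = 0"
  using assms(2,3)
proof (induction k arbitrary: j x y)
  case (Suc k)
  have "zeta_sub_prod h (Suc j) k A z y = 0" if "Suc j \<le> h z" for z y
    using Suc.IH[of "Suc j" z] Suc.prems(1) that by simp
  with Suc.prems(2) show ?case
    by (simp add: zeta_sub_vanishes[OF assms(1)])
qed simp

lemma qdiff_funpow_eq_zeta_sub_prod:
  assumes rec: "\<And>n. a n = qtimes h zeta_mat (a (n - 1))"
  shows "(qdiff ^^ k) a n = (\<lambda>x y. zeta_sub_prod h 0 k (a (n - int k)) x y / qvar powi (int k * n))"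
proof (induction k arbitrary: n)
  case (Suc k)
  define A where "A = a (n - int (Suc k))"
  have "a (n - int k) = qtimes h zeta_mat A"
    using rec[of "n - int k"] by (simp add: A_def algebra_simps)
  then have prod: "zeta_sub_prod h 0 (Suc k) A
      = (\<lambda>x y. zeta_sub_prod h 0 k (a (n - int k)) x y - qvar ^ k * zeta_sub_prod h 0 k A x y)"
    by (simp only: zeta_sub_prod_Suc_right) (simp add: zeta_sub_def zeta_sub_prod_diff)
  have powers: "qvar powi (int k * (n - 1)) = qvar powi (int k * n) / qvar ^ k"
    "qvar powi (int (Suc k) * n) = qvar powi (int k * n) * qvar powi n"
    using qvar_nonzero by (simp_all add: algebra_simps power_int_diff power_int_add)
  show ?case
  proof (intro ext)
    fix x y
    let ?X = "zeta_sub_prod h 0 k (a (n - int k)) x y" and ?Y = "zeta_sub_prod h 0 k A x y"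
    have "a (n - 1 - int k) = A"
      by (simp add: A_def algebra_simps)
    then have "(qdiff ^^ Suc k) a n x y
        = (?X / qvar powi (int k * n) - ?Y / qvar powi (int k * (n - 1))) / qvar powi n"
      by (simp add: qdiff_def Suc.IH)
    also have "\<dots> = (?X - qvar ^ k * ?Y) / qvar powi (int (Suc k) * n)"
      unfolding powers using qvar_nonzero by (simp add: field_simps)
    also have "\<dots> = zeta_sub_prod h 0 (Suc k) A x y / qvar powi (int (Suc k) * n)"
      unfolding prod by simp
    finally show "(qdiff ^^ Suc k) a n x y
        = zeta_sub_prod h 0 (Suc k) (a (n - int (Suc k))) x y / qvar powi (int (Suc k) * n)"
      by (simp add: A_def)
  qed
qed simp

lemma zeta_sub_prod_eq_0:
  fixes h :: "'a::{finite,order} \<Rightarrow> nat"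
  assumes "height_fun h"
  shows "zeta_sub_prod h 0 (Max (range h) + 1) A = (\<lambda>x y. 0)"
proof (intro ext)
  fix x y
  have "h z < Max (range h) + 1" for z
    by (simp add: less_Suc_eq_le)
  then show "zeta_sub_prod h 0 (Max (range h) + 1) A x y = 0"
    by (intro zeta_sub_prod_vanishes[OF assms]) (auto dest: leD)
qed

lemma qdiff_funpow_zeta_qpow:
  fixes h :: "'a::{finite,order} \<Rightarrow> nat"
  assumes "height_fun h"
  shows "(qdiff ^^ (Max (range h) + 1)) (zeta_qpow h) = (\<lambda>n x y. 0)"
  by (intro ext)
    (subst qdiff_funpow_eq_zeta_sub_prod[of "zeta_qpow h" h, OF zeta_qpow_rec[OF assms]],
      subst zeta_sub_prod_eq_0[OF assms], simp)

section \<open>Sequences annihilated by a power of a \<open>q\<close>-difference operator\<close>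

definition seq_qdiff :: "'b::field \<Rightarrow> (int \<Rightarrow> 'b) \<Rightarrow> int \<Rightarrow> 'b"
  where "seq_qdiff c f n = (f n - f (n - 1)) / c powi n"

lemma qdiff_funpow_apply: "(qdiff ^^ k) a n x y = (seq_qdiff qvar ^^ k) (\<lambda>m. a m x y) n"
  by (induction k arbitrary: n) (simp_all add: qdiff_def seq_qdiff_def)

lemma poly_q_antidifference:
  fixes c :: "'b::field"
  assumes "\<And>k. c ^ k = 1 \<Longrightarrow> k = 0"
  obtains P where "\<And>u. poly P u - poly P (u / c) = u * poly Q u"
proof
  define d where "d i = 1 - inverse (c ^ Suc i)" for i
  define P where "P = (\<Sum>i\<le>degree Q. monom (coeff Q i / d i) (Suc i))"
  have "d i \<noteq> 0" for i
    using assms[of "Suc i"] by (auto simp: d_def field_simps)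
  moreover have "coeff Q i / d i * u ^ Suc i - coeff Q i / d i * (u / c) ^ Suc i
      = coeff Q i / d i * d i * u ^ Suc i" for i and u
    by (simp add: d_def power_divide divide_inverse power_inverse algebra_simps)
  ultimately have monom_step: "coeff Q i / d i * u ^ Suc i - coeff Q i / d i * (u / c) ^ Suc i
      = u * (coeff Q i * u ^ i)" for i and u
    by simp
  fix u
  have "poly P u - poly P (u / c)
      = (\<Sum>i\<le>degree Q. coeff Q i / d i * u ^ Suc i - coeff Q i / d i * (u / c) ^ Suc i)"
    by (simp add: P_def poly_sum poly_monom sum_subtractf)
  also have "\<dots> = u * poly Q u"
    by (simp only: monom_step) (simp add: poly_altdef sum_distrib_left)
  finally show "poly P u - poly P (u / c) = u * poly Q u" .
qed

lemma seq_qdiff_funpow_eq_0_imp_poly: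
  fixes c :: "'b::field"
  assumes "c \<noteq> 0" and "\<And>k. c ^ k = 1 \<Longrightarrow> k = 0" and "(seq_qdiff c ^^ k) f = (\<lambda>_. 0)"
  obtains P where "\<And>n. f n = poly P (c powi n)"
  using assms(3)
proof (induction k arbitrary: f thesis)
  case 0
  then show ?case by (metis funpow_0 poly_0)
next
  case (Suc k)
  obtain Q where Q: "\<And>n. seq_qdiff c f n = poly Q (c powi n)"
    using Suc.IH[of "seq_qdiff c f"] Suc.prems(2) by (metis funpow_Suc_right o_apply)
  obtain P where P: "\<And>u. poly P u - poly P (u / c) = u * poly Q u"
    using poly_q_antidifference assms(2) by blast
  define g where "g n = f n - poly P (c powi n)" for n
  have "g n = g (n - 1)" for n
  proof -
    have "f n - f (n - 1) = c powi n * poly Q (c powi n)"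
      using Q[of n] assms(1) by (simp add: seq_qdiff_def field_simps)
    moreover have "c powi (n - 1) = c powi n / c"
      using assms(1) by (simp add: power_int_diff)
    ultimately show ?thesis
      using P[of "c powi n"] by (simp add: g_def algebra_simps)
  qed
  then have "g n = g 0" for n
    by (induction n rule: int_induct[where k = 0]) (simp_all, metis add_diff_cancel_right')
  moreover have "f n = poly P (c powi n) + g n" for n
    by (simp add: g_def)
  ultimately have "f n = poly (P + [:g 0:]) (c powi n)" for n
    by simp
  then show ?case by (rule Suc.prems(1))
qed

lemma zeta_qpow_entry_poly:
  fixes h :: "'a::{finite,order} \<Rightarrow> nat"
  assumes "height_fun h"
  obtains p where "\<And>n. poly p (qint n) = zeta_qpow h n x y"
proof -
  have "(seq_qdiff qvar ^^ (Max (range h) + 1)) (\<lambda>n. zeta_qpow h n x y) = (\<lambda>_. 0)"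
  proof
    fix n
    show "(seq_qdiff qvar ^^ (Max (range h) + 1)) (\<lambda>n. zeta_qpow h n x y) n = 0"
      using qdiff_funpow_zeta_qpow[OF assms] by (simp only: flip: qdiff_funpow_apply)
  qed
  then obtain P where P: "\<And>n. zeta_qpow h n x y = poly P (qvar powi n)"
    using seq_qdiff_funpow_eq_0_imp_poly qvar_nonzero qvar_power_eq_1_iff by metis
  show ?thesis
    by (rule that[of "pcompose P [:1, qvar - 1:]"])
      (simp add: poly_pcompose P qvar_powi_eq_qint algebra_simps)
qed

section \<open>Positive powers of the zeta matrix and multichains\<close>

definition interval_multichains :: "'a::order \<Rightarrow> 'a \<Rightarrow> nat \<Rightarrow> 'a list set"
  where "interval_multichains x y m = {es. length es = m \<and> sorted_wrt (\<le>) (x # es @ [y])}"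

definition interval_multichain_sum :: "('a::{finite,order} \<Rightarrow> nat) \<Rightarrow> 'a \<Rightarrow> 'a \<Rightarrow> nat \<Rightarrow> qfield"
  where "interval_multichain_sum h x y m = (\<Sum>es\<in>interval_multichains x y m. qvar ^ sum_list (map h es))"

lemma finite_interval_multichains: "finite (interval_multichains (x::'a::{finite,order}) y m)"
proof (rule finite_subset)
  show "interval_multichains x y m \<subseteq> {es. set es \<subseteq> UNIV \<and> length es = m}"
    by (auto simp: interval_multichains_def)
qed (rule finite_lists_length_eq, simp)

lemma interval_multichains_0: "interval_multichains x y 0 = (if x \<le> y then {[]} else {})"
  by (auto simp: interval_multichains_def)

lemma interval_multichains_Suc:
  "interval_multichains x y (Suc m)
     = (\<lambda>(z, es). z # es) ` (SIGMA z:{z. x \<le> z}. interval_multichains z y m)"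
  by (auto simp: interval_multichains_def sorted_wrt2 length_Suc_conv intro: order_trans)

lemma interval_multichain_sum_Suc:
  "interval_multichain_sum h x y (Suc m)
     = qtimes h zeta_mat (\<lambda>x y. interval_multichain_sum h x y m) x y"
proof -
  have "inj_on (\<lambda>(z, es). z # es) (SIGMA z:{z. x \<le> z}. interval_multichains z y m)"
    by (auto simp: inj_on_def)
  then have "interval_multichain_sum h x y (Suc m)
      = (\<Sum>(z, es)\<in>(SIGMA z:{z. x \<le> z}. interval_multichains z y m). qvar ^ sum_list (map h (z # es)))"
    unfolding interval_multichain_sum_def interval_multichains_Suc
    by (subst sum.reindex) (simp_all add: case_prod_beta)
  also have "\<dots> = (\<Sum>z\<in>{z. x \<le> z}. \<Sum>es\<in>interval_multichains z y m. qvar ^ h z * qvar ^ sum_list (map h es))"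
    by (subst sum.Sigma) (auto simp: finite_interval_multichains power_add)
  also have "\<dots> = (\<Sum>z\<in>UNIV. if x \<le> z then qvar ^ h z * interval_multichain_sum h z y m else 0)"
    by (simp add: interval_multichain_sum_def sum_distrib_left sum.If_cases)
  also have "\<dots> = qtimes h zeta_mat (\<lambda>x y. interval_multichain_sum h x y m) x y"
    unfolding qtimes_def zeta_mat_def by (rule sum.cong) auto
  finally show ?thesis .
qed

lemma zeta_qpow_of_nat: "zeta_qpow h (int (Suc m)) x y = interval_multichain_sum h x y m"
proof -
  have "zeta_qpow h (int k) = (qtimes h zeta_mat ^^ k) (qunit h)" for k
    by (simp add: zeta_qpow_def)
  moreover have "(qtimes h zeta_mat ^^ Suc m) (qunit h) = (\<lambda>x y. interval_multichain_sum h x y m)"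
  proof (induction m)
    case 0
    show ?case
      by (intro ext) (simp add: zeta_mat_def interval_multichain_sum_def interval_multichains_0)
  next
    case (Suc m)
    then show ?case
      by (intro ext) (simp only: funpow.simps(2) o_apply interval_multichain_sum_Suc)
  qed
  ultimately show ?thesis
    by (simp only:)
qed

lemma interval_multichain_sum_bot_top:
  "interval_multichain_sum h (bot::'a::{finite,order_bot,order_top}) top m = multichain_sum h m"
  by (simp add: interval_multichain_sum_def interval_multichains_def multichain_sum_def sorted_wrt_append)

lemma poly_eqI_infinite:
  fixes p q :: "'a::idom poly"
  assumes "infinite S" and "\<And>x. x \<in> S \<Longrightarrow> poly p x = poly q x"
  shows "p = q"
proof (rule ccontr)
  assume "p \<noteq> q"
  then have "finite {x. poly (p - q) x = 0}" by (intro poly_roots_finite) simp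
  moreover have "S \<subseteq> {x. poly (p - q) x = 0}" using assms(2) by auto
  ultimately show False using assms(1) finite_subset by blast
qed

lemma qZeta_eqI:
  assumes "\<And>n. n \<ge> 2 \<Longrightarrow> poly p (qint (int n)) = multichain_sum h (n - 1)"
  shows "qZeta h = p"
  unfolding qZeta_def
proof (rule the_equality)
  fix p'
  assume p': "\<forall>n\<ge>2. poly p' (qint (int n)) = multichain_sum h (n - 1)"
  have "infinite ((\<lambda>n. qint (int n)) ` {2..})"
    using inj_qint_of_nat infinite_Ici by (auto dest: finite_imageD inj_on_subset)
  then show "p' = p"
    by (rule poly_eqI_infinite) (use assms p' in auto)
qed (use assms in auto)

theorem mainTheorem9:
  fixes h :: "'a::{finite, order_bot, order_top} \<Rightarrow> nat"
  assumes "height_fun h"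
  defines "H \<equiv> Max (range h)"
  shows "(qdiff ^^ (H + 1)) (zeta_qpow h) = (\<lambda>n x y. 0)
         \<and> (\<forall>n::int. poly (qZeta h) (qint n) = zeta_qpow h n bot top)"
proof
  show "(qdiff ^^ (H + 1)) (zeta_qpow h) = (\<lambda>n x y. 0)"
    unfolding H_def using assms(1) by (rule qdiff_funpow_zeta_qpow)
  obtain p where p: "\<And>n. poly p (qint n) = zeta_qpow h n bot top"
    using zeta_qpow_entry_poly[OF assms(1)] by blast
  have "qZeta h = p"
  proof (rule qZeta_eqI)
    fix n :: nat
    assume "n \<ge> 2"
    then have "int n = int (Suc (n - 1))" by simp
    then show "poly p (qint (int n)) = multichain_sum h (n - 1)"
      by (simp only: p zeta_qpow_of_nat interval_multichain_sum_bot_top)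
  qed
  with p show "\<forall>n::int. poly (qZeta h) (qint n) = zeta_qpow h n bot top"
    by simp
qed

end
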